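(* The map $J:\mathbb{D}\times\mathbb{D}\to\mathbb{CP}^3$ defined by $J(z,w)=(z-w:1-zw:i(1+zw):-i(z+w))$ is a biholomorphism from $\mathbb{D}\times\mathbb{D}$ onto $\mathcal{D}_1^{(2)}$.
   Context: $\mathbb{D}$ is the open unit disc in $\mathbb{C}$; points of $\mathbb{CP}^3$ are written in homogeneous coordinates $(s:t:u:v)$. The domain $\mathcal{D}_1^{(2)}\subset\mathbb{CP}^3$ is $\mathcal{D}_1^{(2)}=\{(1:t:u:v): |t|^2+|u|^2-|v|^2>1,\ t^2+u^2-v^2=1,\ \mathrm{Im}(u(\overline{t}+\overline{v}))>0\}\cup\{(0:t:u:v): t^2+u^2-v^2=0,\ \mathrm{Im}(u(\overline{t}+\overline{v}))>0\}$. *)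

theory Defs
  imports "HOL-Analysis.Analysis"
begin

definition holo_fun :: "(complex^'n \<Rightarrow> complex) \<Rightarrow> (complex^'n) set \<Rightarrow> bool" where
  "holo_fun f S \<longleftrightarrow> open S \<and>
     (\<forall>p\<in>S. \<exists>f'. (f has_derivative f') (at p) \<and> (\<forall>c v. f' (c *s v) = c * f' v))"

definition holo_map :: "(complex^'n \<Rightarrow> complex^'m) \<Rightarrow> (complex^'n) set \<Rightarrow> bool" where
  "holo_map g S \<longleftrightarrow> (\<forall>j. holo_fun (\<lambda>q. g q $ j) S)"

text \<open>Complex projective space CP^3: a point is the complex line through a nonzero
 vector of C^4 (with the zero vector removed); coordinates (s:t:u:v) = (x$1:x$2:x$3:x$4).\<close>
definition proj :: "complex^4 \<Rightarrow> (complex^4) set" where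
  "proj x = {c *s x | c. c \<noteq> 0}"

definition CP3 :: "(complex^4) set set" where
  "CP3 = proj ` (UNIV - {0})"

definition holo_into_CP3 :: "(complex^'n \<Rightarrow> (complex^4) set) \<Rightarrow> (complex^'n) set \<Rightarrow> bool" where
  "holo_into_CP3 F S \<longleftrightarrow> open S \<and>
     (\<forall>p\<in>S. \<exists>U g. open U \<and> p \<in> U \<and> U \<subseteq> S \<and> holo_map g U \<and>
        (\<forall>q\<in>U. g q \<noteq> 0 \<and> F q = proj (g q)))"

text \<open>A map on a subset A of CP^3 with values in C^m is holomorphic iff its pullback to
 the cone over A is locally the restriction of a holomorphic map on an open set of C^4
 (equivalently: in affine charts it locally extends holomorphically).\<close>
definition holo_from_CP3 :: "((complex^4) set \<Rightarrow> complex^'m) \<Rightarrow> (complex^4) set set \<Rightarrow> bool" where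
  "holo_from_CP3 \<phi> A \<longleftrightarrow> A \<subseteq> CP3 \<and>
     (\<forall>x. x \<noteq> 0 \<and> proj x \<in> A \<longrightarrow>
        (\<exists>W h. open W \<and> x \<in> W \<and> holo_map h W \<and>
           (\<forall>y\<in>W. y \<noteq> 0 \<and> proj y \<in> A \<longrightarrow> h y = \<phi> (proj y))))"

definition biholo_onto_CP3 :: "(complex^'n \<Rightarrow> (complex^4) set) \<Rightarrow> (complex^'n) set \<Rightarrow> (complex^4) set set \<Rightarrow> bool" where
  "biholo_onto_CP3 F S A \<longleftrightarrow> bij_betw F S A \<and> holo_into_CP3 F S \<and>
     holo_from_CP3 (inv_into S F) A"

definition bidisc :: "(complex^2) set" where
  "bidisc = {p. norm (p $ 1) < 1 \<and> norm (p $ 2) < 1}"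

definition Jmap :: "complex^2 \<Rightarrow> (complex^4) set" where
  "Jmap p = (let z = p $ 1; w = p $ 2 in
     proj (vector [z - w, 1 - z * w, \<i> * (1 + z * w), - \<i> * (z + w)]))"

definition D12 :: "(complex^4) set set" where
  "D12 = {proj x | x. x $ 1 = 1 \<and>
            (norm (x$2))\<^sup>2 + (norm (x$3))\<^sup>2 - (norm (x$4))\<^sup>2 > 1 \<and>
            (x$2)\<^sup>2 + (x$3)\<^sup>2 - (x$4)\<^sup>2 = 1 \<and>
            Im (x$3 * (cnj (x$2) + cnj (x$4))) > 0}
       \<union> {proj x | x. x $ 1 = 0 \<and>
            (x$2)\<^sup>2 + (x$3)\<^sup>2 - (x$4)\<^sup>2 = 0 \<and>
            Im (x$3 * (cnj (x$2) + cnj (x$4))) > 0}"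

end

theory Submission
  imports Defs
begin

(* J(z, w) is the class of the polynomial lift J_lift(z, w) = (z - w, 1 - zw, i(1 + zw), -i(z + w)),
   which never vanishes and lies on the quadric cone x2^2 + x3^2 = x1^2 + x4^2. On that cone the
   degree-0 rational map J_inv recovers (z, w) from every multiple of J_lift(z, w), since
   x2 - i x3 = 2 on J_lift; this gives injectivity and a holomorphic inverse wherever
   x2 - i x3 is nonzero, which is the case on the whole cone over D12. The image is cut out by two
   real forms: on J_lift(z, w) the Hermitian form |x2|^2 + |x3|^2 - |x4|^2 - |x1|^2 equals
   2(1 - |z|^2)(1 - |w|^2), and Im(x3 (conj x2 + conj x4)) equals
   1 - |z|^2 |w|^2 + (1 - |w|^2) Im z + (1 - |z|^2) Im w; both are positive exactly on the bidisc. *)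

definition holo_at :: "(complex^'n \<Rightarrow> complex) \<Rightarrow> complex^'n \<Rightarrow> bool" where
  "holo_at f p \<longleftrightarrow> (\<exists>f'. (f has_derivative f') (at p) \<and> (\<forall>c v. f' (c *s v) = c * f' v))"

lemma holo_funI: "open S \<Longrightarrow> (\<And>p. p \<in> S \<Longrightarrow> holo_at f p) \<Longrightarrow> holo_fun f S"
  unfolding holo_fun_def holo_at_def by blast

lemma holo_at_component: "holo_at (\<lambda>q. q $ i) p"
  unfolding holo_at_def
  by (rule exI[of _ "\<lambda>v. v $ i"]) (simp add: bounded_linear.has_derivative[OF bounded_linear_vec_nth])

lemma holo_at_const: "holo_at (\<lambda>q. k) p"
  unfolding holo_at_def by (rule exI[of _ "\<lambda>v. 0"]) simp

lemma holo_at_add: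
  assumes "holo_at f p" and "holo_at g p"
  shows "holo_at (\<lambda>q. f q + g q) p"
proof -
  obtain f' g' where "(f has_derivative f') (at p)" "\<forall>c v. f' (c *s v) = c * f' v"
    and "(g has_derivative g') (at p)" "\<forall>c v. g' (c *s v) = c * g' v"
    using assms unfolding holo_at_def by blast
  then show ?thesis
    unfolding holo_at_def
    by (intro exI[of _ "\<lambda>v. f' v + g' v"]) (auto intro!: has_derivative_add simp: algebra_simps)
qed

lemma holo_at_minus:
  assumes "holo_at f p"
  shows "holo_at (\<lambda>q. - f q) p"
proof -
  obtain f' where "(f has_derivative f') (at p)" "\<forall>c v. f' (c *s v) = c * f' v"
    using assms unfolding holo_at_def by blast
  then show ?thesis
    unfolding holo_at_def by (intro exI[of _ "\<lambda>v. - f' v"]) (auto intro!: has_derivative_minus)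
qed

lemma holo_at_diff: "holo_at f p \<Longrightarrow> holo_at g p \<Longrightarrow> holo_at (\<lambda>q. f q - g q) p"
  using holo_at_add[OF _ holo_at_minus, of f p g] by simp

lemma holo_at_mult:
  assumes "holo_at f p" and "holo_at g p"
  shows "holo_at (\<lambda>q. f q * g q) p"
proof -
  obtain f' g' where "(f has_derivative f') (at p)" "\<forall>c v. f' (c *s v) = c * f' v"
    and "(g has_derivative g') (at p)" "\<forall>c v. g' (c *s v) = c * g' v"
    using assms unfolding holo_at_def by blast
  then show ?thesis
    unfolding holo_at_def
    by (intro exI[of _ "\<lambda>v. f p * g' v + f' v * g p"]) (auto intro!: has_derivative_mult simp: algebra_simps)
qed

lemma holo_at_inverse:
  assumes "holo_at f p" and "f p \<noteq> 0"
  shows "holo_at (\<lambda>q. inverse (f q)) p"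
proof -
  obtain f' where "(f has_derivative f') (at p)" "\<forall>c v. f' (c *s v) = c * f' v"
    using assms(1) unfolding holo_at_def by blast
  with assms(2) show ?thesis
    unfolding holo_at_def
    by (intro exI[of _ "\<lambda>v. - (inverse (f p) * f' v * inverse (f p))"])
      (auto intro: has_derivative_inverse[where S = UNIV, simplified])
qed

lemma holo_at_divide: "holo_at f p \<Longrightarrow> holo_at g p \<Longrightarrow> g p \<noteq> 0 \<Longrightarrow> holo_at (\<lambda>q. f q / g q) p"
  using holo_at_mult[OF _ holo_at_inverse, of f p g] by (simp add: divide_inverse)

lemma proj_eq_iff: "proj x = proj y \<longleftrightarrow> (\<exists>c. c \<noteq> 0 \<and> y = c *s x)"
proof
  assume "proj x = proj y"
  moreover have "y \<in> proj y"
    unfolding proj_def by (intro CollectI exI[of _ 1]) simp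
  ultimately show "\<exists>c. c \<noteq> 0 \<and> y = c *s x"
    unfolding proj_def by blast
next
  assume "\<exists>c. c \<noteq> 0 \<and> y = c *s x"
  then obtain c where c: "c \<noteq> 0" "y = c *s x" by blast
  have "d *s y \<in> proj x" if "d \<noteq> 0" for d
    unfolding proj_def using that c by (intro CollectI exI[of _ "d * c"]) (simp add: vector_smult_assoc)
  moreover have "d *s x \<in> proj y" if "d \<noteq> 0" for d
    unfolding proj_def using that c by (intro CollectI exI[of _ "d / c"]) (simp add: vector_smult_assoc)
  ultimately show "proj x = proj y"
    unfolding proj_def by blast
qed

definition quadric :: "complex^4 \<Rightarrow> complex" where
  "quadric x = (x$2)\<^sup>2 + (x$3)\<^sup>2 - (x$4)\<^sup>2 - (x$1)\<^sup>2"

definition hermitian_form :: "complex^4 \<Rightarrow> real" where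
  "hermitian_form x = (norm (x$2))\<^sup>2 + (norm (x$3))\<^sup>2 - (norm (x$4))\<^sup>2 - (norm (x$1))\<^sup>2"

definition imag_form :: "complex^4 \<Rightarrow> real" where
  "imag_form x = Im (x$3 * (cnj (x$2) + cnj (x$4)))"

(* Both normalisations x$1 = 1 and x$1 = 0 of D12 are replaced by
   conditions invariant under scaling; for x$1 = 1, the hermitian form is positive iff
   |x2|^2 + |x3|^2 - |x4|^2 > 1. *)
definition D12_cone :: "(complex^4) set" where
  "D12_cone = {x. quadric x = 0 \<and> 0 < imag_form x \<and> (x$1 = 0 \<or> 0 < hermitian_form x)}"

lemma quadric_scale: "quadric (c *s x) = c\<^sup>2 * quadric x"
  unfolding quadric_def by (simp add: power_mult_distrib algebra_simps)

lemma hermitian_form_scale: "hermitian_form (c *s x) = (norm c)\<^sup>2 * hermitian_form x"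
  unfolding hermitian_form_def by (simp add: norm_mult power_mult_distrib algebra_simps)

lemma imag_form_scale: "imag_form (c *s x) = (norm c)\<^sup>2 * imag_form x"
  unfolding imag_form_def cmod_power2 by (simp add: power2_eq_square algebra_simps)

lemma D12_cone_scale: "c \<noteq> 0 \<Longrightarrow> c *s x \<in> D12_cone \<longleftrightarrow> x \<in> D12_cone"
  unfolding D12_cone_def by (simp add: quadric_scale hermitian_form_scale imag_form_scale zero_less_mult_iff)

lemma zero_notin_D12_cone: "0 \<notin> D12_cone"
  by (simp add: D12_cone_def imag_form_def)

lemma D12_eq_proj_D12_cone: "D12 = proj ` D12_cone"
proof
  show "D12 \<subseteq> proj ` D12_cone"
    unfolding D12_def by (auto simp: D12_cone_def quadric_def hermitian_form_def imag_form_def)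
  show "proj ` D12_cone \<subseteq> D12"
  proof
    fix y assume "y \<in> proj ` D12_cone"
    then obtain x where x: "x \<in> D12_cone" "y = proj x" by blast
    show "y \<in> D12"
    proof (cases "x$1 = 0")
      case True
      with x show ?thesis
        unfolding D12_def D12_cone_def quadric_def imag_form_def by auto
    next
      case False
      define x' where "x' = inverse (x$1) *s x"
      have "x' \<in> D12_cone" "x'$1 = 1"
        using x(1) False by (simp_all add: x'_def D12_cone_scale)
      moreover have "y = proj x'"
        unfolding x(2) x'_def proj_eq_iff using False by (intro exI[of _ "inverse (x$1)"]) simp
      ultimately show ?thesis
        unfolding D12_def D12_cone_def quadric_def hermitian_form_def imag_form_def by auto
    qed
  qed
qed

lemma proj_in_D12_iff: "proj x \<in> D12 \<longleftrightarrow> x \<in> D12_cone"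
proof
  assume "proj x \<in> D12"
  then obtain y where "y \<in> D12_cone" "proj y = proj x"
    unfolding D12_eq_proj_D12_cone by auto
  then obtain c where "c \<noteq> 0" "y \<in> D12_cone" "x = c *s y"
    unfolding proj_eq_iff by blast
  then show "x \<in> D12_cone"
    using D12_cone_scale by blast
qed (auto simp: D12_eq_proj_D12_cone)

(* With a = |z|, b = |w|, y1 = Im z, y2 = Im w these are the values of imag_form on J_lift(z, w);
   at the extreme point y1 = -a, y2 = -b the expression factors as (1 - a)(1 - b)(1 - ab). *)
lemma imag_bound_pos:
  fixes a b y1 y2 :: real
  assumes "0 \<le> a" "0 \<le> b" "a < 1" "b < 1" "\<bar>y1\<bar> \<le> a" "\<bar>y2\<bar> \<le> b"
  shows "0 < 1 - a\<^sup>2 * b\<^sup>2 + (1 - b\<^sup>2) * y1 + (1 - a\<^sup>2) * y2"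
proof -
  have y: "- a \<le> y1" "- b \<le> y2"
    using assms by (simp_all add: abs_le_iff)
  have "0 \<le> 1 - a\<^sup>2" "0 \<le> 1 - b\<^sup>2"
    using assms by (simp_all add: abs_square_le_1)
  then have "(1 - b\<^sup>2) * (- a) \<le> (1 - b\<^sup>2) * y1" "(1 - a\<^sup>2) * (- b) \<le> (1 - a\<^sup>2) * y2"
    using y by (simp_all only: mult_left_mono)
  moreover have "1 - a\<^sup>2 * b\<^sup>2 + (1 - b\<^sup>2) * (- a) + (1 - a\<^sup>2) * (- b) = (1 - a) * (1 - b) * (1 - a * b)"
    by (simp add: power2_eq_square algebra_simps)
  moreover have "0 < (1 - a) * (1 - b) * (1 - a * b)"
    using assms mult_strict_mono'[of a 1 b 1] by simp
  ultimately show ?thesis by linarith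
qed

lemma imag_bound_nonpos:
  fixes a b y1 y2 :: real
  assumes "1 \<le> a" "1 \<le> b" "\<bar>y1\<bar> \<le> a" "\<bar>y2\<bar> \<le> b"
  shows "1 - a\<^sup>2 * b\<^sup>2 + (1 - b\<^sup>2) * y1 + (1 - a\<^sup>2) * y2 \<le> 0"
proof -
  have y: "- a \<le> y1" "- b \<le> y2"
    using assms by (simp_all add: abs_le_iff)
  have "1 - a\<^sup>2 \<le> 0" "1 - b\<^sup>2 \<le> 0"
    using assms by (simp_all add: one_le_power)
  then have "(1 - b\<^sup>2) * y1 \<le> (1 - b\<^sup>2) * (- a)" "(1 - a\<^sup>2) * y2 \<le> (1 - a\<^sup>2) * (- b)"
    using y by (simp_all only: mult_left_mono_neg)
  moreover have "1 - a\<^sup>2 * b\<^sup>2 + (1 - b\<^sup>2) * (- a) + (1 - a\<^sup>2) * (- b) = (a - 1) * (b - 1) * (1 - a * b)"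
    by (simp add: power2_eq_square algebra_simps)
  moreover have "(a - 1) * (b - 1) * (1 - a * b) \<le> 0"
    using assms mult_mono[of 1 a 1 b] by (simp add: mult_nonneg_nonpos)
  ultimately show ?thesis by linarith
qed

lemma vector_4 [simp]:
  "(vector [x, y, z, w] :: 'a::zero^4) $ 1 = x"
  "(vector [x, y, z, w] :: 'a::zero^4) $ 2 = y"
  "(vector [x, y, z, w] :: 'a::zero^4) $ 3 = z"
  "(vector [x, y, z, w] :: 'a::zero^4) $ 4 = w"
  unfolding vector_def by simp_all

definition J_lift :: "complex^2 \<Rightarrow> complex^4" where
  "J_lift p = vector [p$1 - p$2, 1 - p$1 * p$2, \<i> * (1 + p$1 * p$2), - \<i> * (p$1 + p$2)]"

(* From the quadric, (x1 + i x4)(i x4 - x1) = -(x2 + i x3)(x2 - i x3), so J_inv inverts J_lift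
   up to the factor 2 / (x2 - i x3); see J_lift_J_inv. *)
definition J_inv :: "complex^4 \<Rightarrow> complex^2" where
  "J_inv x = vector [(x$1 + \<i> * x$4) / (x$2 - \<i> * x$3), (\<i> * x$4 - x$1) / (x$2 - \<i> * x$3)]"

lemma Jmap_eq_proj_J_lift: "Jmap p = proj (J_lift p)"
  by (simp add: Jmap_def J_lift_def Let_def)

lemma J_lift_nonzero: "J_lift p \<noteq> 0"
proof
  assume "J_lift p = 0"
  then have "J_lift p $ 2 - \<i> * J_lift p $ 3 = 0" by simp
  then show False by (simp add: J_lift_def algebra_simps)
qed

lemma quadric_J_lift: "quadric (J_lift p) = 0"
  unfolding quadric_def J_lift_def by (simp add: power2_eq_square algebra_simps)

lemma hermitian_form_J_lift:
  "hermitian_form (J_lift p) = 2 * (1 - (norm (p$1))\<^sup>2) * (1 - (norm (p$2))\<^sup>2)"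
  unfolding hermitian_form_def J_lift_def vector_4 cmod_power2 by (simp add: power2_eq_square algebra_simps)

lemma imag_form_J_lift:
  "imag_form (J_lift p) = 1 - (norm (p$1))\<^sup>2 * (norm (p$2))\<^sup>2
     + (1 - (norm (p$2))\<^sup>2) * Im (p$1) + (1 - (norm (p$1))\<^sup>2) * Im (p$2)"
  unfolding imag_form_def J_lift_def vector_4 cmod_power2 by (simp add: power2_eq_square algebra_simps)

lemma J_lift_in_D12_cone_iff: "J_lift p \<in> D12_cone \<longleftrightarrow> p \<in> bidisc"
proof -
  define a b where "a = norm (p$1)" and "b = norm (p$2)"
  have bounds: "0 \<le> a" "0 \<le> b" "\<bar>Im (p$1)\<bar> \<le> a" "\<bar>Im (p$2)\<bar> \<le> b"
    by (simp_all add: a_def b_def abs_Im_le_cmod)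
  have imag: "imag_form (J_lift p) = 1 - a\<^sup>2 * b\<^sup>2 + (1 - b\<^sup>2) * Im (p$1) + (1 - a\<^sup>2) * Im (p$2)"
    by (simp add: imag_form_J_lift a_def b_def)
  have herm: "hermitian_form (J_lift p) = 2 * ((1 - a\<^sup>2) * (1 - b\<^sup>2))"
    by (simp add: hermitian_form_J_lift a_def b_def)
  show ?thesis
  proof
    assume cone: "J_lift p \<in> D12_cone"
    have "1 \<le> a \<and> 1 \<le> b" if "\<not> (a < 1 \<and> b < 1)"
    proof (cases "p$1 = p$2")
      case True
      with that show ?thesis by (simp add: a_def b_def)
    next
      case False
      then have "0 < (1 - a\<^sup>2) * (1 - b\<^sup>2)"
        using cone herm by (simp add: D12_cone_def J_lift_def)
      moreover have "1 < x\<^sup>2 \<longleftrightarrow> 1 < x" if "0 \<le> x" for x :: real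
        using abs_square_le_1[of x] that by auto
      ultimately show ?thesis
        using that bounds by (auto simp: zero_less_mult_iff abs_square_less_1)
    qed
    then show "p \<in> bidisc"
      using cone imag bounds imag_bound_nonpos[of a b "Im (p$1)" "Im (p$2)"]
      by (force simp: D12_cone_def bidisc_def a_def b_def)
  next
    assume "p \<in> bidisc"
    then have "a < 1" "b < 1" by (simp_all add: bidisc_def a_def b_def)
    then show "J_lift p \<in> D12_cone"
      using imag_bound_pos[OF bounds(1,2) _ _ bounds(3,4)] imag herm quadric_J_lift bounds
      by (simp add: D12_cone_def abs_square_less_1)
  qed
qed

lemma J_inv_J_lift: "J_inv (J_lift p) = p"
  unfolding vec_eq_iff forall_2 J_inv_def J_lift_def by (simp add: field_simps)

lemma J_inv_scale:
  assumes "c \<noteq> 0"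
  shows "J_inv (c *s x) = J_inv x"
proof -
  have "(c *s x)$1 + \<i> * (c *s x)$4 = c * (x$1 + \<i> * x$4)"
    and "\<i> * (c *s x)$4 - (c *s x)$1 = c * (\<i> * x$4 - x$1)"
    and "(c *s x)$2 - \<i> * (c *s x)$3 = c * (x$2 - \<i> * x$3)"
    by (simp_all add: algebra_simps)
  with assms show ?thesis
    unfolding J_inv_def by (simp only: mult_divide_mult_cancel_left_if) simp
qed

lemma J_lift_J_inv:
  assumes "quadric x = 0" and d: "x$2 - \<i> * x$3 \<noteq> 0"
  shows "J_lift (J_inv x) = (2 / (x$2 - \<i> * x$3)) *s x"
proof -
  let ?d = "x$2 - \<i> * x$3"
  have "(x$1 + \<i> * x$4) * (\<i> * x$4 - x$1) = (- x$2 - \<i> * x$3) * ?d"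
    using assms(1) unfolding quadric_def by (simp add: algebra_simps power2_eq_square)
  then have prod: "J_inv x $ 1 * J_inv x $ 2 = (- x$2 - \<i> * x$3) / ?d"
    using d by (simp add: J_inv_def)
  have diff: "J_inv x $ 1 - J_inv x $ 2 = 2 * x$1 / ?d"
    and sum: "J_inv x $ 1 + J_inv x $ 2 = 2 * \<i> * x$4 / ?d"
    by (simp_all add: J_inv_def diff_divide_distrib[symmetric] add_divide_distrib[symmetric])
  show ?thesis
    unfolding vec_eq_iff forall_4 J_lift_def vector_4 vector_smult_component prod diff sum
    using d by (simp add: field_simps)
qed

lemma D12_cone_denominator_nonzero:
  assumes "x \<in> D12_cone"
  shows "x$2 - \<i> * x$3 \<noteq> 0"
proof
  assume "x$2 - \<i> * x$3 = 0"
  then have x2: "x$2 = \<i> * x$3" by simp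
  have "(x$1)\<^sup>2 + (x$4)\<^sup>2 = 0"
    using assms x2 by (simp add: D12_cone_def quadric_def power_mult_distrib algebra_simps)
  then have "(x$4)\<^sup>2 = - (x$1)\<^sup>2"
    by (simp only: add_eq_0_iff)
  then have n14: "norm (x$4) = norm (x$1)"
    by (metis norm_minus_cancel norm_power power2_eq_iff_nonneg norm_ge_zero)
  have "0 < imag_form x" using assms by (simp add: D12_cone_def)
  also have "imag_form x = - (norm (x$3))\<^sup>2 + Im (x$3 * cnj (x$4))"
    unfolding imag_form_def x2 cmod_power2 by (simp add: algebra_simps power2_eq_square)
  also have "\<dots> \<le> norm (x$3) * (norm (x$4) - norm (x$3))"
    using abs_Im_le_cmod[of "x$3 * cnj (x$4)"] by (simp add: norm_mult power2_eq_square algebra_simps)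
  finally have "norm (x$3) < norm (x$4)"
    by (simp add: zero_less_mult_iff)
  moreover have "hermitian_form x = 2 * ((norm (x$3))\<^sup>2 - (norm (x$4))\<^sup>2)"
    unfolding hermitian_form_def x2 n14 by (simp add: norm_mult)
  ultimately have "x$1 \<noteq> 0" "hermitian_form x < 0"
    using n14 by (auto simp: power_strict_mono)
  with assms show False by (simp add: D12_cone_def)
qed

lemma J_inv_on_D12_cone:
  assumes "x \<in> D12_cone"
  shows "J_inv x \<in> bidisc" and "Jmap (J_inv x) = proj x"
proof -
  let ?d = "x$2 - \<i> * x$3"
  have d: "?d \<noteq> 0" by (rule D12_cone_denominator_nonzero[OF assms])
  have J: "J_lift (J_inv x) = (2 / ?d) *s x"
    using assms d by (simp add: D12_cone_def J_lift_J_inv)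
  show "J_inv x \<in> bidisc"
    unfolding J_lift_in_D12_cone_iff[symmetric] J using assms d by (simp add: D12_cone_scale)
  have c: "?d / 2 * (2 / ?d) = 1" "?d / 2 \<noteq> 0"
    using d by simp_all
  have "x = (?d / 2) *s ((2 / ?d) *s x)"
    by (simp only: vector_smult_assoc c(1) vector_smult_lid)
  with c(2) show "Jmap (J_inv x) = proj x"
    unfolding Jmap_eq_proj_J_lift J proj_eq_iff by blast
qed

lemma inj_Jmap: "inj Jmap"
proof
  fix p q assume "Jmap p = Jmap q"
  then obtain c where "c \<noteq> 0" "J_lift q = c *s J_lift p"
    unfolding Jmap_eq_proj_J_lift proj_eq_iff by blast
  then show "p = q"
    by (metis J_inv_J_lift J_inv_scale)
qed

lemma Jmap_image_bidisc: "Jmap ` bidisc = D12"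
proof
  show "Jmap ` bidisc \<subseteq> D12"
    by (auto simp: Jmap_eq_proj_J_lift proj_in_D12_iff J_lift_in_D12_cone_iff)
  show "D12 \<subseteq> Jmap ` bidisc"
    unfolding D12_eq_proj_D12_cone using J_inv_on_D12_cone by (metis image_eqI image_subsetI)
qed

lemma open_bidisc: "open bidisc"
  unfolding bidisc_def by (intro open_Collect_conj open_Collect_less continuous_intros)

lemma holo_map_J_lift: "open S \<Longrightarrow> holo_map J_lift S"
  unfolding holo_map_def forall_4 J_lift_def
  by (auto intro!: holo_funI holo_at_add holo_at_diff holo_at_mult holo_at_minus holo_at_component holo_at_const)

lemma holo_map_J_inv: "holo_map J_inv {x. x$2 - \<i> * x$3 \<noteq> 0}"
  unfolding holo_map_def forall_2 J_inv_def
  by (auto intro!: holo_funI open_Collect_neq continuous_intros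
      holo_at_add holo_at_diff holo_at_mult holo_at_divide holo_at_component holo_at_const)

lemma holo_into_CP3_Jmap: "holo_into_CP3 Jmap bidisc"
  unfolding holo_into_CP3_def
  using open_bidisc holo_map_J_lift[OF open_bidisc] J_lift_nonzero
  by (intro conjI ballI exI[of _ bidisc] exI[of _ J_lift]) (simp_all add: Jmap_eq_proj_J_lift)

lemma holo_from_CP3_inv_Jmap: "holo_from_CP3 (inv_into bidisc Jmap) D12"
  unfolding holo_from_CP3_def
proof (intro conjI allI impI)
  show "D12 \<subseteq> CP3"
    unfolding D12_eq_proj_D12_cone CP3_def using zero_notin_D12_cone by blast
next
  let ?W = "{y::complex^4. y$2 - \<i> * y$3 \<noteq> 0}"
  fix x :: "complex^4" assume "x \<noteq> 0 \<and> proj x \<in> D12"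
  then have "x \<in> ?W"
    unfolding mem_Collect_eq proj_in_D12_iff using D12_cone_denominator_nonzero by blast
  moreover have "open ?W"
    by (intro open_Collect_neq continuous_intros)
  moreover have "inv_into bidisc Jmap (proj y) = J_inv y" if "proj y \<in> D12" for y
    using that J_inv_on_D12_cone inj_on_subset[OF inj_Jmap subset_UNIV]
    by (auto simp: proj_in_D12_iff intro: inv_into_f_eq)
  ultimately show "\<exists>W h. open W \<and> x \<in> W \<and> holo_map h W \<and>
      (\<forall>y\<in>W. y \<noteq> 0 \<and> proj y \<in> D12 \<longrightarrow> h y = inv_into bidisc Jmap (proj y))"
    using holo_map_J_inv by (intro exI[of _ ?W] exI[of _ J_inv]) simp
qed

theorem theorem4p8:
  shows "biholo_onto_CP3 Jmap bidisc D12"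
  unfolding biholo_onto_CP3_def bij_betw_def
  using inj_on_subset[OF inj_Jmap subset_UNIV] Jmap_image_bidisc holo_into_CP3_Jmap holo_from_CP3_inv_Jmap
  by blast

end
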